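(* Let $G$ be a perfect finite group and $\Phi:G\to\mathrm{GL}_N(\mathbb C)$ a faithful representation such that (a) $\Phi=\bigoplus_{i=1}^n\Phi_i$ with each $\Phi_i$ irreducible, and (b) each $L_i:=\Phi_i(G)$ is quasisimple with simple quotient $S_i=L_i/\mathbf Z(L_i)$. Then there is a subset $\{j_1,\dots,j_m\}\subseteq\{1,\dots,n\}$ such that $G$ is isomorphic to a central product $R_{j_1}*\cdots*R_{j_m}$ where each $R_{j_i}$ is a quasisimple cover of $S_{j_i}$. If moreover (c) $\mathrm{Tr}(\Phi(g))\ne0$ for all $g\in G$, and (d) for every quasisimple subgroup $H\le G$ and every proper subset $\mathcal X\subsetneq\{\Phi_1,\dots,\Phi_n\}$ such that $\Phi_i(H)=\Phi_i(G)$ for all $\Phi_i\in\mathcal X$, there is $h\in H$ with $\mathrm{Tr}(\Phi_i(h))=0$ for all $\Phi_i\in\mathcal X$, then $G$ is quasisimple. *)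

theory Defs
  imports "Jordan_Normal_Form.Matrix" "HOL-Algebra.SimpleGroups" "HOL-Algebra.Generated_Groups"
    "HOL-Algebra.Coset"
begin

definition mat_trace :: "complex mat \<Rightarrow> complex" where
  "mat_trace A = (\<Sum>i < dim_row A. A $$ (i, i))"

definition group_center :: "('a, 'b) monoid_scheme \<Rightarrow> 'a set" where
  "group_center G = {z \<in> carrier G. \<forall>g \<in> carrier G. z \<otimes>\<^bsub>G\<^esub> g = g \<otimes>\<^bsub>G\<^esub> z}"

definition perfect_group :: "('a, 'b) monoid_scheme \<Rightarrow> bool" where
  "perfect_group G \<longleftrightarrow> group G \<and> derived G (carrier G) = carrier G"

definition quasisimple :: "('a, 'b) monoid_scheme \<Rightarrow> bool" where
  "quasisimple G \<longleftrightarrow> perfect_group G \<and> simple_group (G Mod group_center G)"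

definition quasisimple_cover_of :: "('a, 'b) monoid_scheme \<Rightarrow> ('c, 'd) monoid_scheme \<Rightarrow> bool" where
  "quasisimple_cover_of R S \<longleftrightarrow> quasisimple R \<and> (R Mod group_center R) \<cong> S"

definition mat_group :: "nat \<Rightarrow> complex mat set \<Rightarrow> complex mat monoid" where
  "mat_group d S = \<lparr>carrier = S, mult = (*), one = 1\<^sub>m d\<rparr>"

definition representation :: "('a, 'b) monoid_scheme \<Rightarrow> nat \<Rightarrow> ('a \<Rightarrow> complex mat) \<Rightarrow> bool" where
  "representation G d \<Phi> \<longleftrightarrow>
     (\<forall>g \<in> carrier G. \<Phi> g \<in> carrier_mat d d \<and> invertible_mat (\<Phi> g)) \<and>
     (\<forall>g \<in> carrier G. \<forall>h \<in> carrier G. \<Phi> (g \<otimes>\<^bsub>G\<^esub> h) = \<Phi> g * \<Phi> h)"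

definition invariant_subspace :: "('a, 'b) monoid_scheme \<Rightarrow> nat \<Rightarrow> ('a \<Rightarrow> complex mat) \<Rightarrow> complex vec set \<Rightarrow> bool" where
  "invariant_subspace G d \<Phi> W \<longleftrightarrow>
     W \<subseteq> carrier_vec d \<and> 0\<^sub>v d \<in> W \<and>
     (\<forall>v \<in> W. \<forall>w \<in> W. v + w \<in> W) \<and>
     (\<forall>c :: complex. \<forall>v \<in> W. c \<cdot>\<^sub>v v \<in> W) \<and>
     (\<forall>g \<in> carrier G. \<forall>v \<in> W. \<Phi> g *\<^sub>v v \<in> W)"

definition irreducible_rep :: "('a, 'b) monoid_scheme \<Rightarrow> nat \<Rightarrow> ('a \<Rightarrow> complex mat) \<Rightarrow> bool" where
  "irreducible_rep G d \<Phi> \<longleftrightarrow> representation G d \<Phi> \<and> d > 0 \<and>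
     (\<forall>W. invariant_subspace G d \<Phi> W \<longrightarrow> W = {0\<^sub>v d} \<or> W = carrier_vec d)"

definition rep_image :: "('a, 'b) monoid_scheme \<Rightarrow> nat \<Rightarrow> ('a \<Rightarrow> complex mat) \<Rightarrow> complex mat monoid" where
  "rep_image G d \<Phi> = mat_group d (\<Phi> ` carrier G)"

definition internal_central_product :: "('a, 'b) monoid_scheme \<Rightarrow> 'i set \<Rightarrow> ('i \<Rightarrow> 'a set) \<Rightarrow> bool" where
  "internal_central_product G J H \<longleftrightarrow>
     (\<forall>j \<in> J. subgroup (H j) G) \<and>
     (\<forall>j \<in> J. \<forall>k \<in> J. j \<noteq> k \<longrightarrow> (\<forall>x \<in> H j. \<forall>y \<in> H k. x \<otimes>\<^bsub>G\<^esub> y = y \<otimes>\<^bsub>G\<^esub> x)) \<and>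
     generate G (\<Union>j \<in> J. H j) = carrier G"

end

theory Submission
  imports Defs "Jordan_Normal_Form.Char_Poly"
begin

text \<open>
  For a set \<open>T\<close> of indices let \<open>N(T)\<close> (\<open>central_preimage T\<close>) be the normal subgroup of those
  \<open>g\<close> with \<open>\<Phi>\<^sub>k g\<close> central in \<open>L\<^sub>k\<close> for every \<open>k \<in> T\<close>; by faithfulness \<open>N({1..n})\<close> is central
  in \<open>G\<close>. Choose \<open>J\<close> minimal with \<open>N(J) = N({1..n})\<close>. For \<open>j \<in> J\<close> the normal subgroup
  \<open>N(J - {j})\<close> (\<open>cofactor j\<close>) is not mapped into \<open>Z(L\<^sub>j)\<close>, hence onto the quasisimple group \<open>L\<^sub>j\<close>. Its derived
  subgroup \<open>R\<^sub>j\<close> (\<open>component j\<close>) still maps onto \<open>L\<^sub>j\<close>, agrees with \<open>N(J - {j})\<close> modulo \<open>Z(G)\<close>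
  and is therefore perfect, and only its central elements map into \<open>Z(L\<^sub>j)\<close>: it is a quasisimple
  cover of \<open>S\<^sub>j\<close>. For \<open>j \<noteq> k\<close>, \<open>N(J - {j})\<close> and \<open>N(J - {k})\<close> meet in the central subgroup \<open>N(J)\<close>,
  so they commute modulo \<open>Z(G)\<close> and their derived subgroups commute. Lifting preimages one index
  at a time gives \<open>G = Z(G)\<langle>R\<^sub>j | j \<in> J\<rangle>\<close>, and as \<open>G\<close> is perfect the \<open>R\<^sub>j\<close> generate \<open>G\<close>.

  Each \<open>\<Phi>\<^sub>i\<close> maps exactly one \<open>R\<^sub>j\<close> onto \<open>L\<^sub>i\<close> and all others into \<open>Z(L\<^sub>i)\<close>, which consists of
  scalars by Schur's lemma. If \<open>|J| \<ge> 2\<close>, hypothesis (d) applied to each \<open>R\<^sub>j\<close> yields \<open>h\<^sub>j \<in> R\<^sub>j\<close>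
  with vanishing trace in every \<open>\<Phi>\<^sub>i\<close> mapping \<open>R\<^sub>j\<close> onto \<open>L\<^sub>i\<close>; the product of the \<open>h\<^sub>j\<close> then has
  trace zero in every \<open>\<Phi>\<^sub>i\<close>, contradicting (c). Hence \<open>J = {j}\<close> and \<open>G = R\<^sub>j\<close> is quasisimple.
\<close>

section \<open>Centres, centralizers and commutators\<close>

lemma group_centerI:
  assumes "z \<in> carrier G" and "\<And>g. g \<in> carrier G \<Longrightarrow> z \<otimes>\<^bsub>G\<^esub> g = g \<otimes>\<^bsub>G\<^esub> z"
  shows "z \<in> group_center G"
  using assms unfolding group_center_def by auto

lemma group_center_closed: "z \<in> group_center G \<Longrightarrow> z \<in> carrier G"
  unfolding group_center_def by auto

lemma group_center_commute:
  "z \<in> group_center G \<Longrightarrow> g \<in> carrier G \<Longrightarrow> z \<otimes>\<^bsub>G\<^esub> g = g \<otimes>\<^bsub>G\<^esub> z"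
  unfolding group_center_def by auto

definition centralizer :: "('a, 'b) monoid_scheme \<Rightarrow> 'a \<Rightarrow> 'a set" where
  "centralizer G y = {x \<in> carrier G. y \<otimes>\<^bsub>G\<^esub> x = x \<otimes>\<^bsub>G\<^esub> y}"

lemma (in group) inv_commute:
  assumes x: "x \<in> carrier G" and y: "y \<in> carrier G" and xy: "x \<otimes> y = y \<otimes> x"
  shows "inv x \<otimes> y = y \<otimes> inv x"
proof -
  have "inv x \<otimes> y = inv x \<otimes> (y \<otimes> x) \<otimes> inv x" using x y by (simp add: m_assoc)
  also have "\<dots> = inv x \<otimes> (x \<otimes> y) \<otimes> inv x" unfolding xy ..
  also have "\<dots> = y \<otimes> inv x" using x y by (simp add: m_assoc[symmetric])
  finally show ?thesis .
qed

lemma (in group) subgroup_centralizer: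
  assumes y: "y \<in> carrier G" shows "subgroup (centralizer G y) G"
proof (rule subgroupI)
  fix a b assume "a \<in> centralizer G y" "b \<in> centralizer G y"
  then have ab: "a \<in> carrier G" "b \<in> carrier G" "y \<otimes> a = a \<otimes> y" "y \<otimes> b = b \<otimes> y"
    unfolding centralizer_def by auto
  have "y \<otimes> (a \<otimes> b) = (y \<otimes> a) \<otimes> b" using ab(1,2) y by (simp add: m_assoc)
  also have "\<dots> = (a \<otimes> y) \<otimes> b" by (simp only: ab(3))
  also have "\<dots> = (a \<otimes> b) \<otimes> y" using ab y by (simp add: m_assoc)
  finally show "a \<otimes> b \<in> centralizer G y" using ab unfolding centralizer_def by simp
next
  fix a assume "a \<in> centralizer G y"
  then show "inv a \<in> centralizer G y"
    using y inv_commute[of a y] unfolding centralizer_def by auto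
qed (use y in \<open>auto simp: centralizer_def\<close>)

lemma (in group) subgroup_group_center: "subgroup (group_center G) G"
proof -
  have "subgroup (\<Inter> (centralizer G ` carrier G)) G"
    using subgroups_Inter[of "centralizer G ` carrier G"] subgroup_centralizer by blast
  moreover have "group_center G = \<Inter> (centralizer G ` carrier G)"
    unfolding group_center_def centralizer_def by auto
  ultimately show ?thesis by simp
qed

lemma (in group) normal_group_center: "group_center G \<lhd> G"
  unfolding normal_inv_iff
proof (intro conjI ballI subgroup_group_center)
  fix x z assume x: "x \<in> carrier G" and z: "z \<in> group_center G"
  then have "x \<otimes> z \<otimes> inv x = z"
    using group_center_closed[OF z] by (simp add: group_center_commute[OF z x, symmetric] m_assoc)
  then show "x \<otimes> z \<otimes> inv x \<in> group_center G" using z by simp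
qed

lemma (in group) commute_if_commutator_one:
  assumes "a \<in> carrier G" "b \<in> carrier G" "a \<otimes> b \<otimes> inv a \<otimes> inv b = \<one>"
  shows "a \<otimes> b = b \<otimes> a"
proof -
  have "a \<otimes> b = (a \<otimes> b \<otimes> inv a \<otimes> inv b) \<otimes> b \<otimes> a" using assms(1,2) by (simp add: m_assoc)
  then show ?thesis unfolding assms(3) using assms(1,2) by simp
qed

lemma (in group) commutator_mem_normal_inter:
  assumes N1: "N1 \<lhd> G" and N2: "N2 \<lhd> G" and y: "y \<in> N1" and a: "a \<in> N2"
  shows "y \<otimes> a \<otimes> inv y \<otimes> inv a \<in> N1 \<inter> N2"
proof -
  interpret N1: normal N1 G by (rule N1)
  interpret N2: normal N2 G by (rule N2)
  have ya: "y \<in> carrier G" "a \<in> carrier G" using y a by auto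
  have "y \<otimes> (a \<otimes> inv y \<otimes> inv a) \<in> N1"
    using N1.inv_op_closed2[OF ya(2) N1.m_inv_closed[OF y]] y by simp
  then have "y \<otimes> a \<otimes> inv y \<otimes> inv a \<in> N1" using ya by (simp add: m_assoc)
  moreover have "y \<otimes> a \<otimes> inv y \<otimes> inv a \<in> N2"
    using N2.inv_op_closed2[OF ya(1) a] N2.m_inv_closed[OF a] by simp
  ultimately show ?thesis by simp
qed

lemma (in group) commutator_central_mult:
  assumes z1: "z1 \<in> group_center G" and z2: "z2 \<in> group_center G"
    and a: "a \<in> carrier G" and b: "b \<in> carrier G"
  shows "z1 \<otimes> a \<otimes> (z2 \<otimes> b) \<otimes> inv (z1 \<otimes> a) \<otimes> inv (z2 \<otimes> b) = a \<otimes> b \<otimes> inv a \<otimes> inv b"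
proof -
  have z: "z1 \<in> carrier G" "z2 \<in> carrier G" using z1 z2 by (auto intro: group_center_closed)
  have "z1 \<otimes> a \<otimes> (z2 \<otimes> b) \<otimes> inv (z1 \<otimes> a) \<otimes> inv (z2 \<otimes> b)
      = z1 \<otimes> (a \<otimes> z2) \<otimes> b \<otimes> (inv a \<otimes> inv z1) \<otimes> (inv b \<otimes> inv z2)"
    using z a b by (simp add: m_assoc inv_mult_group)
  also have "\<dots> = z1 \<otimes> (z2 \<otimes> a) \<otimes> b \<otimes> (inv a \<otimes> inv z1) \<otimes> (inv b \<otimes> inv z2)"
    using group_center_commute[OF z2 a] by simp
  also have "\<dots> = (z1 \<otimes> z2) \<otimes> (a \<otimes> b \<otimes> inv a) \<otimes> inv z1 \<otimes> inv b \<otimes> inv z2"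
    using z a b by (simp add: m_assoc)
  also have "\<dots> = (a \<otimes> b \<otimes> inv a) \<otimes> (z1 \<otimes> z2 \<otimes> inv z1) \<otimes> inv b \<otimes> inv z2"
    using group_center_commute[OF subgroup.m_closed[OF subgroup_group_center z1 z2], of "a \<otimes> b \<otimes> inv a"]
      z a b by (simp add: m_assoc)
  also have "\<dots> = (a \<otimes> b \<otimes> inv a) \<otimes> (z2 \<otimes> (z1 \<otimes> inv z1)) \<otimes> inv b \<otimes> inv z2"
    using group_center_commute[OF z1 z(2)] z by (simp add: m_assoc)
  also have "\<dots> = (a \<otimes> b \<otimes> inv a) \<otimes> inv b \<otimes> (z2 \<otimes> inv z2)"
    using group_center_commute[OF z2, of "inv b"] z a b by (simp add: m_assoc)
  finally show ?thesis using z a b by simp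
qed

lemma (in group) conj_commutator:
  assumes g: "g \<in> carrier G" and a: "a \<in> carrier G" and b: "b \<in> carrier G"
  shows "g \<otimes> (a \<otimes> b \<otimes> inv a \<otimes> inv b) \<otimes> inv g =
    (g \<otimes> a \<otimes> inv g) \<otimes> (g \<otimes> b \<otimes> inv g) \<otimes> inv (g \<otimes> a \<otimes> inv g) \<otimes> inv (g \<otimes> b \<otimes> inv g)"
proof -
  have cancel: "inv g \<otimes> (g \<otimes> x) = x" if "x \<in> carrier G" for x
    using g that by (simp add: m_assoc[symmetric])
  show ?thesis using assms by (simp add: m_assoc inv_mult_group cancel)
qed

lemma (in group) derived_set_central_mult:
  assumes B: "B \<subseteq> group_center G <#> A" and A: "A \<subseteq> carrier G"
  shows "derived_set G B \<subseteq> derived_set G A"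
proof
  fix c assume "c \<in> derived_set G B"
  then obtain x y where xy: "x \<in> B" "y \<in> B" and c: "c = x \<otimes> y \<otimes> inv x \<otimes> inv y" by auto
  obtain z1 a where z1: "z1 \<in> group_center G" "a \<in> A" "x = z1 \<otimes> a"
    using xy(1) B unfolding set_mult_def by auto
  obtain z2 b where z2: "z2 \<in> group_center G" "b \<in> A" "y = z2 \<otimes> b"
    using xy(2) B unfolding set_mult_def by auto
  have ab: "a \<in> carrier G" "b \<in> carrier G" using z1(2) z2(2) A by auto
  have "c = a \<otimes> b \<otimes> inv a \<otimes> inv b"
    unfolding c z1(3) z2(3) by (rule commutator_central_mult[OF z1(1) z2(1) ab])
  then show "c \<in> derived_set G A" using z1(2) z2(2) by blast
qed

lemma (in group) subset_if_perfect_mod_center: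
  assumes perfect: "derived G (carrier G) = carrier G" and N: "subgroup N G"
    and cover: "carrier G \<subseteq> group_center G <#> N"
  shows "carrier G \<subseteq> N"
proof -
  have "derived G (carrier G) \<subseteq> generate G (derived_set G N)"
    unfolding derived_def
    using mono_generate[OF derived_set_central_mult[OF cover subgroup.subset[OF N]]] .
  also have "\<dots> \<subseteq> N" using derived_incl[OF subset_refl N] unfolding derived_def .
  finally show ?thesis using perfect by simp
qed

lemma (in group) derived_subset_centralizer:
  assumes A: "A \<subseteq> carrier G" and y: "y \<in> carrier G"
    and central: "\<And>a. a \<in> A \<Longrightarrow> y \<otimes> a \<otimes> inv y \<otimes> inv a \<in> group_center G"
  shows "derived G A \<subseteq> centralizer G y"
  unfolding derived_def
proof (rule generate_subgroup_incl[OF _ subgroup_centralizer[OF y]], rule subsetI)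
  have conj: "\<exists>w \<in> group_center G. y \<otimes> a \<otimes> inv y = w \<otimes> a" if "a \<in> A" for a
    using that A y central[OF that] by (auto simp: m_assoc intro!: bexI[of _ "y \<otimes> a \<otimes> inv y \<otimes> inv a"])
  fix c assume "c \<in> derived_set G A"
  then obtain a b where ab: "a \<in> A" "b \<in> A" and c: "c = a \<otimes> b \<otimes> inv a \<otimes> inv b" by auto
  have abc: "a \<in> carrier G" "b \<in> carrier G" "c \<in> carrier G" using ab c A by auto
  obtain w1 w2 where w: "w1 \<in> group_center G" "w2 \<in> group_center G"
    and conj_a: "y \<otimes> a \<otimes> inv y = w1 \<otimes> a" and conj_b: "y \<otimes> b \<otimes> inv y = w2 \<otimes> b"
    using conj[OF ab(1)] conj[OF ab(2)] by blast
  have conj_c: "y \<otimes> c \<otimes> inv y = c"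
    unfolding c conj_commutator[OF y abc(1,2)] conj_a conj_b
    by (rule commutator_central_mult[OF w abc(1,2)])
  have "y \<otimes> c = (y \<otimes> c \<otimes> inv y) \<otimes> y" using abc y by (simp add: m_assoc)
  also have "\<dots> = c \<otimes> y" unfolding conj_c ..
  finally show "c \<in> centralizer G y" using abc unfolding centralizer_def by simp
qed

lemma (in group_hom) image_group_center:
  assumes onto: "h ` carrier G = carrier H" and z: "z \<in> group_center G"
  shows "h z \<in> group_center H"
proof (rule group_centerI)
  show "h z \<in> carrier H" using group_center_closed[OF z] by simp
  fix y assume "y \<in> carrier H"
  then obtain x where x: "x \<in> carrier G" "y = h x" using onto by auto
  show "h z \<otimes>\<^bsub>H\<^esub> y = y \<otimes>\<^bsub>H\<^esub> h z"
    using group_center_commute[OF z x(1)] group_center_closed[OF z] x by (metis hom_mult)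
qed

lemma (in group) normal_common_preimage:
  assumes hom: "\<And>k. k \<in> T \<Longrightarrow> group_hom G (L k) (p k)"
    and normal: "\<And>k. k \<in> T \<Longrightarrow> N k \<lhd> L k"
  shows "{g \<in> carrier G. \<forall>k\<in>T. p k g \<in> N k} \<lhd> G"
  unfolding normal_inv_iff
proof (intro conjI ballI subgroupI)
  fix x y assume "x \<in> {g \<in> carrier G. \<forall>k\<in>T. p k g \<in> N k}" "y \<in> {g \<in> carrier G. \<forall>k\<in>T. p k g \<in> N k}"
  then show "x \<otimes> y \<in> {g \<in> carrier G. \<forall>k\<in>T. p k g \<in> N k}"
    using group_hom.hom_mult[OF hom] normal.axioms(1)[OF normal] by (auto intro: subgroup.m_closed)
next
  fix x assume "x \<in> {g \<in> carrier G. \<forall>k\<in>T. p k g \<in> N k}"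
  then show "inv x \<in> {g \<in> carrier G. \<forall>k\<in>T. p k g \<in> N k}"
    using group_hom.hom_inv[OF hom] normal.axioms(1)[OF normal] by (auto intro: subgroup.m_inv_closed)
next
  fix x y assume "x \<in> carrier G" "y \<in> {g \<in> carrier G. \<forall>k\<in>T. p k g \<in> N k}"
  then show "x \<otimes> y \<otimes> inv x \<in> {g \<in> carrier G. \<forall>k\<in>T. p k g \<in> N k}"
    using group_hom.hom_mult[OF hom] group_hom.hom_inv[OF hom] group_hom.hom_closed[OF hom]
      normal.inv_op_closed2[OF normal] by auto
next
  have "\<one> \<in> {g \<in> carrier G. \<forall>k\<in>T. p k g \<in> N k}"
    using group_hom.hom_one[OF hom] subgroup.one_closed[OF normal_imp_subgroup[OF normal]] by auto
  then show "{g \<in> carrier G. \<forall>k\<in>T. p k g \<in> N k} \<noteq> {}" by blast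
qed auto

lemma (in group) group_center_conj:
  assumes z: "z \<in> group_center G" and x: "x \<in> carrier G"
  shows "z \<otimes> x \<otimes> inv z = x"
  using group_center_closed[OF z] x by (simp add: group_center_commute[OF z x] m_assoc)

lemma (in group) foldr_mult_closed:
  "(\<And>k. k \<in> set ks \<Longrightarrow> x k \<in> carrier G) \<Longrightarrow> foldr (\<lambda>k y. x k \<otimes> y) ks \<one> \<in> carrier G"
  by (induction ks) auto

lemma (in group_hom) hom_foldr_mult_mod_center:
  assumes "distinct ks" and "\<And>k. k \<in> set ks \<Longrightarrow> x k \<in> carrier G"
    and "\<And>k. k \<in> set ks \<Longrightarrow> k \<noteq> j \<Longrightarrow> h (x k) \<in> group_center H"
  shows "\<exists>c\<in>group_center H.
    h (foldr (\<lambda>k y. x k \<otimes> y) ks \<one>) = (if j \<in> set ks then h (x j) else \<one>\<^bsub>H\<^esub>) \<otimes>\<^bsub>H\<^esub> c"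
  using assms
proof (induction ks)
  case Nil
  then show ?case using subgroup.one_closed[OF H.subgroup_group_center] by force
next
  case (Cons k ks)
  let ?e = "if j \<in> set ks then h (x j) else \<one>\<^bsub>H\<^esub>"
  obtain c where c: "c \<in> group_center H" and IH: "h (foldr (\<lambda>k y. x k \<otimes> y) ks \<one>) = ?e \<otimes>\<^bsub>H\<^esub> c"
    using Cons by auto
  have xk: "x k \<in> carrier G" and rest: "foldr (\<lambda>k y. x k \<otimes> y) ks \<one> \<in> carrier G"
    using Cons.prems(2) G.foldr_mult_closed[of ks x] by auto
  have e: "?e \<in> carrier H" and cH: "c \<in> carrier H"
    using Cons.prems(2) group_center_closed[OF c] by auto
  show ?case
  proof (cases "k = j")
    case True
    then have "j \<notin> set ks" using Cons.prems(1) by auto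
    then show ?thesis using IH c True xk rest cH by auto
  next
    case False
    then have z: "h (x k) \<in> group_center H" using Cons.prems(3) by simp
    have "h (foldr (\<lambda>k y. x k \<otimes> y) (k # ks) \<one>) = h (x k) \<otimes>\<^bsub>H\<^esub> (?e \<otimes>\<^bsub>H\<^esub> c)"
      using IH xk rest by simp
    also have "\<dots> = ?e \<otimes>\<^bsub>H\<^esub> (h (x k) \<otimes>\<^bsub>H\<^esub> c)"
      using group_center_commute[OF z e] e cH xk by (simp add: H.m_assoc[symmetric])
    finally show ?thesis
      using False subgroup.m_closed[OF H.subgroup_group_center z c] by auto
  qed
qed

section \<open>Quasisimple groups\<close>

lemma quasisimple_imp_group: "quasisimple L \<Longrightarrow> group L"
  unfolding quasisimple_def perfect_group_def by auto

lemma quasisimple_derived: "quasisimple L \<Longrightarrow> derived L (carrier L) = carrier L"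
  unfolding quasisimple_def perfect_group_def by auto

lemma quasisimple_simple_quotient: "quasisimple L \<Longrightarrow> simple_group (L Mod group_center L)"
  unfolding quasisimple_def by auto

lemma quasisimple_not_central:
  assumes L: "quasisimple L" shows "\<not> carrier L \<subseteq> group_center L"
proof
  assume "carrier L \<subseteq> group_center L"
  then have Z: "group_center L = carrier L" unfolding group_center_def by auto
  interpret L: group L using quasisimple_imp_group[OF L] .
  have "carrier (L Mod group_center L) = (\<lambda>a. carrier L) ` carrier L"
    unfolding Z carrier_FactGroup
    by (rule image_cong[OF refl]) (simp add: L.coset_join2[OF _ L.subgroup_self])
  also have "\<dots> = {carrier L}" using L.one_closed by blast
  finally have "carrier (L Mod group_center L) = {carrier L}" .
  then have "Coset.order (L Mod group_center L) = 1" unfolding Coset.order_def by simp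
  then show False using simple_group.order_gt_one[OF quasisimple_simple_quotient[OF L]] by simp
qed

lemma quasisimple_normal_subgroup:
  assumes L: "quasisimple L" and N: "N \<lhd> L" and noncentral: "\<not> N \<subseteq> group_center L"
  shows "N = carrier L"
proof -
  interpret L: group L using quasisimple_imp_group[OF L] .
  interpret Z: normal "group_center L" L using L.normal_group_center .
  have N_carrier: "N \<subseteq> carrier L" using normal_imp_subgroup[OF N] subgroup.subset by blast
  let ?q = "\<lambda>a. group_center L #>\<^bsub>L\<^esub> a"
  have q: "group_hom L (L Mod group_center L) ?q"
    using Z.r_coset_hom_Mod Z.factorgroup_is_group
    by (simp add: group_hom_def group_hom_axioms_def L.is_group)
  have q_onto: "?q ` carrier L = carrier (L Mod group_center L)"
    by (simp add: carrier_FactGroup)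
  have "?q ` N \<lhd> L Mod group_center L"
    using normal.surj_hom_normal_subgroup[OF N q q_onto] .
  then have "?q ` N = carrier (L Mod group_center L) \<or> ?q ` N = {group_center L}"
    using simple_group.no_real_normal_subgroup[OF quasisimple_simple_quotient[OF L]] by simp
  moreover have "?q ` N \<noteq> {group_center L}"
  proof
    assume "?q ` N = {group_center L}"
    moreover obtain x where x: "x \<in> N" "x \<notin> group_center L" using noncentral by auto
    ultimately have "?q x = group_center L" by auto
    then show False using L.coset_join1[OF _ _ Z.subgroup_axioms] x N_carrier by blast
  qed
  ultimately have onto: "?q ` N = carrier (L Mod group_center L)" by blast
  have "carrier L \<subseteq> group_center L <#>\<^bsub>L\<^esub> N"
  proof
    fix y assume y: "y \<in> carrier L"
    then obtain x where x: "x \<in> N" "?q y = ?q x" using onto q_onto by (metis imageE image_eqI)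
    have "y \<in> ?q x" using L.rcos_self[OF y Z.subgroup_axioms] x(2) by simp
    then show "y \<in> group_center L <#>\<^bsub>L\<^esub> N" using x(1) unfolding r_coset_def set_mult_def by auto
  qed
  then show ?thesis
    using L.subset_if_perfect_mod_center[OF quasisimple_derived[OF L] normal_imp_subgroup[OF N]] N_carrier
    by blast
qed

lemma quasisimple_cover_ofI:
  assumes R: "perfect_group R" and L: "quasisimple L"
    and f: "group_hom R L f" and onto: "f ` carrier R = carrier L"
    and central: "\<And>x. x \<in> carrier R \<Longrightarrow> f x \<in> group_center L \<Longrightarrow> x \<in> group_center R"
  shows "quasisimple_cover_of R (L Mod group_center L)"
proof -
  interpret f: group_hom R L f by (rule f)
  interpret Z: normal "group_center L" L using f.H.normal_group_center .
  interpret ZR: normal "group_center R" R using f.G.normal_group_center .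
  let ?q = "(\<lambda>a. group_center L #>\<^bsub>L\<^esub> a) \<circ> f"
  have "group_hom R (L Mod group_center L) ?q"
    using hom_compose[OF f.homh Z.r_coset_hom_Mod] Z.factorgroup_is_group
    by (simp add: group_hom_def group_hom_axioms_def f.G.is_group)
  then interpret q: group_hom R "L Mod group_center L" ?q .
  have "?q ` carrier R = (\<lambda>a. group_center L #>\<^bsub>L\<^esub> a) ` f ` carrier R"
    by (rule image_comp[symmetric])
  then have q_onto: "?q ` carrier R = carrier (L Mod group_center L)"
    by (simp add: carrier_FactGroup onto)
  have "kernel R (L Mod group_center L) ?q = {x \<in> carrier R. f x \<in> group_center L}"
    unfolding kernel_def
    using f.H.coset_join1[OF _ _ Z.subgroup_axioms] f.H.coset_join2[OF _ Z.subgroup_axioms] by auto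
  also have "\<dots> = group_center R"
    using central f.image_group_center[OF onto] by (auto intro: group_center_closed)
  finally have "(\<lambda>X. the_elem (?q ` X)) \<in> iso (R Mod group_center R) (L Mod group_center L)"
    using q.FactGroup_iso_set[OF q_onto] by simp
  then have iso: "R Mod group_center R \<cong> L Mod group_center L"
    and "inv_into (carrier (R Mod group_center R)) (\<lambda>X. the_elem (?q ` X))
           \<in> iso (L Mod group_center L) (R Mod group_center R)"
    using group.iso_set_sym[OF ZR.factorgroup_is_group] unfolding is_iso_def by auto
  then have "simple_group (R Mod group_center R)"
    using simple_group.iso_simple[OF _ ZR.factorgroup_is_group] L unfolding quasisimple_def by blast
  then show ?thesis using R iso unfolding quasisimple_cover_of_def quasisimple_def by blast
qed

section \<open>Schur's lemma for matrices\<close>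

lemma invariant_subspace_eigenspace:
  assumes rep: "representation G d \<Phi>" and c: "c \<in> carrier_mat d d"
    and comm: "\<And>g. g \<in> carrier G \<Longrightarrow> c * \<Phi> g = \<Phi> g * c"
  shows "invariant_subspace G d \<Phi> {v \<in> carrier_vec d. c *\<^sub>v v = \<mu> \<cdot>\<^sub>v v}"
  unfolding invariant_subspace_def
proof (intro conjI ballI allI)
  show "0\<^sub>v d \<in> {v \<in> carrier_vec d. c *\<^sub>v v = \<mu> \<cdot>\<^sub>v v}" using c by (auto intro!: eq_vecI)
next
  fix x y assume "x \<in> {v \<in> carrier_vec d. c *\<^sub>v v = \<mu> \<cdot>\<^sub>v v}" "y \<in> {v \<in> carrier_vec d. c *\<^sub>v v = \<mu> \<cdot>\<^sub>v v}"
  then show "x + y \<in> {v \<in> carrier_vec d. c *\<^sub>v v = \<mu> \<cdot>\<^sub>v v}"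
    using c by (auto simp: mult_add_distrib_mat_vec smult_add_distrib_vec)
next
  fix a :: complex and x assume "x \<in> {v \<in> carrier_vec d. c *\<^sub>v v = \<mu> \<cdot>\<^sub>v v}"
  then show "a \<cdot>\<^sub>v x \<in> {v \<in> carrier_vec d. c *\<^sub>v v = \<mu> \<cdot>\<^sub>v v}"
    using c by (auto simp: mult_mat_vec smult_smult_assoc mult.commute)
next
  fix g x assume g: "g \<in> carrier G" and "x \<in> {v \<in> carrier_vec d. c *\<^sub>v v = \<mu> \<cdot>\<^sub>v v}"
  then have x: "x \<in> carrier_vec d" "c *\<^sub>v x = \<mu> \<cdot>\<^sub>v x" by auto
  have \<Phi>g: "\<Phi> g \<in> carrier_mat d d" using rep g unfolding representation_def by auto
  have "c *\<^sub>v (\<Phi> g *\<^sub>v x) = (c * \<Phi> g) *\<^sub>v x" using c \<Phi>g x by simp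
  also have "\<dots> = (\<Phi> g * c) *\<^sub>v x" using comm[OF g] by simp
  also have "\<dots> = \<Phi> g *\<^sub>v (\<mu> \<cdot>\<^sub>v x)" using c \<Phi>g x by simp
  also have "\<dots> = \<mu> \<cdot>\<^sub>v (\<Phi> g *\<^sub>v x)" using \<Phi>g x mult_mat_vec by blast
  finally show "\<Phi> g *\<^sub>v x \<in> {v \<in> carrier_vec d. c *\<^sub>v v = \<mu> \<cdot>\<^sub>v v}" using \<Phi>g x by auto
qed auto

lemma irreducible_rep_commuting_scalar:
  assumes irr: "irreducible_rep G d \<Phi>" and c: "c \<in> carrier_mat d d"
    and comm: "\<And>g. g \<in> carrier G \<Longrightarrow> c * \<Phi> g = \<Phi> g * c"
  shows "\<exists>\<mu>. c = \<mu> \<cdot>\<^sub>m 1\<^sub>m d"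
proof -
  have rep: "representation G d \<Phi>" and "d > 0"
    and irr_W: "\<And>W. invariant_subspace G d \<Phi> W \<Longrightarrow> W = {0\<^sub>v d} \<or> W = carrier_vec d"
    using irr unfolding irreducible_rep_def by auto
  have "degree (char_poly c) = d" using degree_monic_char_poly[OF c] by simp
  then have "\<not> constant (poly (char_poly c))"
    using \<open>d > 0\<close> constant_degree[of "char_poly c"] by simp
  then obtain \<mu> where "poly (char_poly c) \<mu> = 0" using fundamental_theorem_of_algebra by blast
  then obtain v where v: "eigenvector c v \<mu>"
    using eigenvalue_root_char_poly[OF c] unfolding eigenvalue_def by blast
  let ?W = "{v \<in> carrier_vec d. c *\<^sub>v v = \<mu> \<cdot>\<^sub>v v}"
  have v_W: "v \<in> ?W" "v \<noteq> 0\<^sub>v d" using v c unfolding eigenvector_def by auto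
  have "?W = {0\<^sub>v d} \<or> ?W = carrier_vec d"
    by (rule irr_W[OF invariant_subspace_eigenspace[OF rep c comm]])
  then have W: "?W = carrier_vec d" using v_W by auto
  have "c = \<mu> \<cdot>\<^sub>m 1\<^sub>m d"
  proof (rule eq_matI)
    fix i j assume "i < dim_row (\<mu> \<cdot>\<^sub>m 1\<^sub>m d)" and "j < dim_col (\<mu> \<cdot>\<^sub>m 1\<^sub>m d)"
    then have ij: "i < d" "j < d" by auto
    have "unit_vec d j \<in> ?W" unfolding W by simp
    then have "c *\<^sub>v unit_vec d j = \<mu> \<cdot>\<^sub>v unit_vec d j" by simp
    then have "(c *\<^sub>v unit_vec d j) $ i = (\<mu> \<cdot>\<^sub>v unit_vec d j) $ i" by simp
    then show "c $$ (i, j) = (\<mu> \<cdot>\<^sub>m 1\<^sub>m d) $$ (i, j)" using c ij by simp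
  qed (use c in auto)
  then show ?thesis by blast
qed

lemma mat_trace_mult_scalar:
  assumes "(A :: complex mat) \<in> carrier_mat d d"
  shows "mat_trace (A * (\<mu> \<cdot>\<^sub>m 1\<^sub>m d)) = \<mu> * mat_trace A"
  using assms unfolding mat_trace_def by (simp add: sum_distrib_left)

section \<open>A jointly faithful family of quasisimple quotients\<close>

locale quasisimple_quotients = group G for G :: "('a, 'b) monoid_scheme" (structure) +
  fixes n :: nat and L :: "nat \<Rightarrow> ('c, 'd) monoid_scheme" and p :: "nat \<Rightarrow> 'a \<Rightarrow> 'c"
  assumes perfect: "derived G (carrier G) = carrier G"
    and hom: "i < n \<Longrightarrow> group_hom G (L i) (p i)"
    and onto: "i < n \<Longrightarrow> p i ` carrier G = carrier (L i)"
    and jointly_faithful: "g \<in> carrier G \<Longrightarrow> (\<And>i. i < n \<Longrightarrow> p i g = \<one>\<^bsub>L i\<^esub>) \<Longrightarrow> g = \<one>"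
    and quasisimple: "i < n \<Longrightarrow> quasisimple (L i)"
begin

definition central_preimage :: "nat set \<Rightarrow> 'a set" where
  "central_preimage T = {g \<in> carrier G. \<forall>k\<in>T. p k g \<in> group_center (L k)}"

lemma normal_central_preimage: "T \<subseteq> {..<n} \<Longrightarrow> central_preimage T \<lhd> G"
  unfolding central_preimage_def
  using hom quasisimple_imp_group[OF quasisimple] group.normal_group_center
  by (intro normal_common_preimage) auto

lemma central_preimage_antimono: "T \<subseteq> T' \<Longrightarrow> central_preimage T' \<subseteq> central_preimage T"
  unfolding central_preimage_def by auto

lemma central_preimage_Un: "central_preimage (A \<union> B) = central_preimage A \<inter> central_preimage B"
  unfolding central_preimage_def by auto

lemma central_preimage_empty: "central_preimage {} = carrier G"
  unfolding central_preimage_def by auto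

lemma central_preimage_insert:
  "g \<in> central_preimage T \<Longrightarrow> p k g \<in> group_center (L k) \<Longrightarrow> g \<in> central_preimage (insert k T)"
  unfolding central_preimage_def by auto

lemma central_preimage_all_central: "central_preimage {..<n} \<subseteq> group_center G"
proof
  fix g assume g: "g \<in> central_preimage {..<n}"
  then have gG: "g \<in> carrier G" unfolding central_preimage_def by auto
  show "g \<in> group_center G"
  proof (rule group_centerI[OF gG])
    fix x assume x: "x \<in> carrier G"
    have "g \<otimes> x \<otimes> inv g \<otimes> inv x = \<one>"
    proof (rule jointly_faithful)
      fix i assume i: "i < n"
      interpret h: group_hom G "L i" "p i" by (rule hom[OF i])
      have "p i g \<in> group_center (L i)" using g i unfolding central_preimage_def by auto
      then show "p i (g \<otimes> x \<otimes> inv g \<otimes> inv x) = \<one>\<^bsub>L i\<^esub>"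
        using gG x by (simp add: h.H.group_center_conj)
    qed (use gG x in simp)
    then show "g \<otimes> x = x \<otimes> g" using commute_if_commutator_one gG x by blast
  qed
qed

end

locale minimal_central_basis = quasisimple_quotients +
  fixes J :: "nat set"
  assumes basis_subset: "J \<subseteq> {..<n}"
    and basis_preimage: "central_preimage J = central_preimage {..<n}"
    and basis_minimal: "j \<in> J \<Longrightarrow> central_preimage (J - {j}) \<noteq> central_preimage {..<n}"

lemma (in quasisimple_quotients) ex_minimal_central_basis: "\<exists>J. minimal_central_basis G n L p J"
proof -
  let ?S = "{J. J \<subseteq> {..<n} \<and> central_preimage J = central_preimage {..<n}}"
  have "finite ?S" by (rule finite_subset[of _ "Pow {..<n}"]) auto
  then obtain J where J: "J \<in> ?S" and min: "\<And>J'. J' \<in> ?S \<Longrightarrow> J' \<subseteq> J \<Longrightarrow> J = J'"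
    using finite_has_minimal2[of ?S "{..<n}"] by auto
  have "central_preimage (J - {j}) \<noteq> central_preimage {..<n}" if "j \<in> J" for j
    using min[of "J - {j}"] J that by auto
  then show ?thesis using J
    by (intro exI[of _ J] minimal_central_basis.intro minimal_central_basis_axioms.intro)
      (auto intro: quasisimple_quotients_axioms)
qed

context minimal_central_basis
begin

abbreviation cofactor :: "nat \<Rightarrow> 'a set" where
  "cofactor j \<equiv> central_preimage (J - {j})"

definition component :: "nat \<Rightarrow> 'a set" where
  "component j = derived G (cofactor j)"

lemma central_preimage_basis_central: "central_preimage J \<subseteq> group_center G"
  using basis_preimage central_preimage_all_central by simp

lemma central_if_image_central:
  assumes j: "j \<in> J" and x: "x \<in> cofactor j" and "p j x \<in> group_center (L j)"
  shows "x \<in> group_center G"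
proof -
  have "x \<in> central_preimage (insert j (J - {j}))"
    using x assms(3) by (rule central_preimage_insert)
  then show ?thesis using j central_preimage_basis_central by (auto simp: insert_absorb)
qed

lemma normal_cofactor: "cofactor j \<lhd> G"
  using basis_subset by (intro normal_central_preimage) auto

lemma normal_component: "component j \<lhd> G"
  unfolding component_def by (rule derived_is_normal[OF normal_cofactor])

lemma subgroup_component: "subgroup (component j) G"
  using normal_component normal_imp_subgroup by blast

lemma component_subset_cofactor: "component j \<subseteq> cofactor j"
  unfolding component_def by (rule derived_incl[OF subset_refl normal_imp_subgroup[OF normal_cofactor]])

lemma component_carrier: "component j \<subseteq> carrier G"
  using subgroup.subset[OF subgroup_component] .

lemma image_cofactor:
  assumes j: "j \<in> J" shows "p j ` cofactor j = carrier (L j)"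
proof (rule quasisimple_normal_subgroup)
  have jn: "j < n" using j basis_subset by auto
  show "quasisimple (L j)" using quasisimple[OF jn] .
  show "p j ` cofactor j \<lhd> L j"
    using normal.surj_hom_normal_subgroup[OF normal_cofactor hom[OF jn] onto[OF jn]] .
  obtain x where "x \<in> cofactor j" "x \<notin> central_preimage J"
    using basis_minimal[OF j] basis_preimage central_preimage_antimono[of "J - {j}" J] by blast
  then show "\<not> p j ` cofactor j \<subseteq> group_center (L j)"
    using j central_preimage_insert[of x "J - {j}" j] by (auto simp: insert_absorb)
qed

lemma image_component:
  assumes j: "j \<in> J" shows "p j ` component j = carrier (L j)"
proof -
  have jn: "j < n" using j basis_subset by auto
  have "p j ` component j = derived (L j) (p j ` cofactor j)"
    unfolding component_def
    by (rule group_hom.derived_img[OF hom[OF jn], symmetric]) (auto simp: central_preimage_def)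
  also have "\<dots> = carrier (L j)" using image_cofactor[OF j] quasisimple_derived[OF quasisimple[OF jn]] by simp
  finally show ?thesis .
qed

lemma cofactor_subset_center_mult:
  assumes j: "j \<in> J" shows "cofactor j \<subseteq> group_center G <#> component j"
proof
  fix m assume m: "m \<in> cofactor j"
  have jn: "j < n" using j basis_subset by auto
  interpret h: group_hom G "L j" "p j" by (rule hom[OF jn])
  have mG: "m \<in> carrier G" using m unfolding central_preimage_def by auto
  obtain r where r: "r \<in> component j" "p j r = p j m"
    using image_component[OF j] mG by (metis h.hom_closed imageE)
  have rG: "r \<in> carrier G" using r(1) component_carrier by blast
  have "m \<otimes> inv r \<in> cofactor j"
    using m r(1) component_subset_cofactor normal_imp_subgroup[OF normal_cofactor]
    by (blast intro: subgroup.m_closed subgroup.m_inv_closed)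
  moreover have "p j (m \<otimes> inv r) \<in> group_center (L j)"
    using r(2) mG rG subgroup.one_closed[OF h.H.subgroup_group_center] by simp
  ultimately have "m \<otimes> inv r \<in> group_center G" by (rule central_if_image_central[OF j])
  moreover have "m = (m \<otimes> inv r) \<otimes> r" using mG rG by (simp add: m_assoc)
  ultimately show "m \<in> group_center G <#> component j" using r(1) unfolding set_mult_def by blast
qed

lemma derived_component: assumes j: "j \<in> J" shows "derived G (component j) = component j"
proof
  show "derived G (component j) \<subseteq> component j"
    by (rule derived_incl[OF subset_refl subgroup_component])
  have "derived_set G (cofactor j) \<subseteq> derived_set G (component j)"
    by (rule derived_set_central_mult[OF cofactor_subset_center_mult[OF j] component_carrier])
  then show "component j \<subseteq> derived G (component j)"
    unfolding component_def derived_def by (rule mono_generate)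
qed

lemma components_commute:
  assumes j: "j \<in> J" and k: "k \<in> J" and jk: "j \<noteq> k"
    and x: "x \<in> component j" and y: "y \<in> component k"
  shows "x \<otimes> y = y \<otimes> x"
proof -
  have yG: "y \<in> carrier G" using y component_carrier by blast
  have "(J - {k}) \<union> (J - {j}) = J" using jk by auto
  then have "cofactor k \<inter> cofactor j = central_preimage J"
    by (simp add: central_preimage_Un[symmetric])
  then have central: "y \<otimes> a \<otimes> inv y \<otimes> inv a \<in> group_center G"
    if "a \<in> cofactor j" for a
    using commutator_mem_normal_inter[OF normal_cofactor normal_cofactor
        subsetD[OF component_subset_cofactor y] that] central_preimage_basis_central by auto
  have "cofactor j \<subseteq> carrier G"
    using subgroup.subset[OF normal_imp_subgroup[OF normal_cofactor]] .
  then have "derived G (cofactor j) \<subseteq> centralizer G y"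
    using derived_subset_centralizer[OF _ yG central] by blast
  then show ?thesis using x unfolding component_def centralizer_def by auto
qed

lemma subgroup_generated_by_components: "subgroup (generate G (\<Union>j\<in>J. component j)) G"
  using generate_is_subgroup component_carrier by blast

lemma generated_by_components_mod_central_preimage:
  assumes "finite T" "T \<subseteq> J" "g \<in> carrier G"
  shows "\<exists>q\<in>generate G (\<Union>j\<in>J. component j). g \<otimes> inv q \<in> central_preimage T"
    (is "\<exists>q\<in>?P. _")
  using assms
proof (induction T arbitrary: g rule: finite_induct)
  case empty
  then show ?case
    using central_preimage_empty subgroup.one_closed[OF subgroup_generated_by_components] by force
next
  case (insert j T)
  note P = subgroup_generated_by_components
  have j: "j \<in> J" and jn: "j < n" using insert.prems basis_subset by auto
  interpret h: group_hom G "L j" "p j" by (rule hom[OF jn])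
  obtain q where q: "q \<in> ?P" "g \<otimes> inv q \<in> central_preimage T" using insert by blast
  have qG: "q \<in> carrier G" using q(1) subgroup.mem_carrier[OF P] by blast
  obtain r where r: "r \<in> component j" "p j r = p j (g \<otimes> inv q)"
    using image_component[OF j] insert.prems(2) qG by (metis h.hom_closed imageE inv_closed m_closed)
  have rG: "r \<in> carrier G" using r(1) component_carrier by blast
  have "r \<in> central_preimage T"
    using r(1) component_subset_cofactor central_preimage_antimono[of T "J - {j}"] insert by blast
  then have "g \<otimes> inv q \<otimes> inv r \<in> central_preimage T"
    using q(2) normal_imp_subgroup[OF normal_central_preimage] insert.prems basis_subset
    by (blast intro: subgroup.m_closed subgroup.m_inv_closed)
  moreover have "p j (g \<otimes> inv q \<otimes> inv r) \<in> group_center (L j)"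
    using r(2) qG rG insert.prems(2) subgroup.one_closed[OF h.H.subgroup_group_center] by simp
  moreover have "g \<otimes> inv q \<otimes> inv r = g \<otimes> inv (r \<otimes> q)"
    using qG rG insert.prems(2) by (simp add: inv_mult_group m_assoc)
  moreover have "r \<otimes> q \<in> ?P" using r(1) j q(1) subgroup.m_closed[OF P] by (blast intro: generate.incl)
  ultimately show ?case using central_preimage_insert by metis
qed

lemma generate_components: "generate G (\<Union>j\<in>J. component j) = carrier G"
proof -
  let ?P = "generate G (\<Union>j\<in>J. component j)"
  note P = subgroup_generated_by_components
  have "carrier G \<subseteq> group_center G <#> ?P"
  proof
    fix g assume g: "g \<in> carrier G"
    obtain q where q: "q \<in> ?P" "g \<otimes> inv q \<in> central_preimage J"
      using generated_by_components_mod_central_preimage[OF finite_subset[OF basis_subset] subset_refl g]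
      by blast
    have "g = (g \<otimes> inv q) \<otimes> q" using g q(1) subgroup.mem_carrier[OF P] by (simp add: m_assoc)
    then show "g \<in> group_center G <#> ?P"
      using q central_preimage_basis_central unfolding set_mult_def by blast
  qed
  then show ?thesis using subset_if_perfect_mod_center[OF perfect P] subgroup.subset[OF P] by blast
qed

lemma quasisimple_cover_component:
  assumes j: "j \<in> J"
  shows "quasisimple_cover_of (G\<lparr>carrier := component j\<rparr>) (L j Mod group_center (L j))"
proof (rule quasisimple_cover_ofI)
  have jn: "j < n" using j basis_subset by auto
  show "perfect_group (G\<lparr>carrier := component j\<rparr>)"
    unfolding perfect_group_def
    using subgroup_imp_group[OF subgroup_component] derived_consistent[OF subset_refl subgroup_component]
      derived_component[OF j] by simp
  show "quasisimple (L j)" using quasisimple[OF jn] .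
  show "group_hom (G\<lparr>carrier := component j\<rparr>) (L j) (p j)"
    using group_hom.induced_group_hom'[OF hom[OF jn] subgroup_component] .
  show "p j ` carrier (G\<lparr>carrier := component j\<rparr>) = carrier (L j)" using image_component[OF j] by simp
  fix x assume x: "x \<in> carrier (G\<lparr>carrier := component j\<rparr>)" and "p j x \<in> group_center (L j)"
  then have "x \<in> group_center G"
    using central_if_image_central[OF j] component_subset_cofactor by auto
  then show "x \<in> group_center (G\<lparr>carrier := component j\<rparr>)"
    using x component_carrier unfolding group_center_def by auto
qed

lemma central_product_of_components:
  "internal_central_product G J component \<and>
   (\<forall>j\<in>J. quasisimple_cover_of (G\<lparr>carrier := component j\<rparr>) (L j Mod group_center (L j)))"
  unfolding internal_central_product_def
  using subgroup_component components_commute generate_components quasisimple_cover_component by blast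

section \<open>Components and their images\<close>

definition onto_indices :: "nat \<Rightarrow> nat set" where
  "onto_indices j = {i. i < n \<and> p i ` component j = carrier (L i)}"

lemma mem_onto_indices_self: "j \<in> J \<Longrightarrow> j \<in> onto_indices j"
  unfolding onto_indices_def using image_component basis_subset by auto

lemma image_component_central:
  assumes i: "i < n" and not_onto: "i \<notin> onto_indices j"
  shows "p i ` component j \<subseteq> group_center (L i)"
proof (rule ccontr)
  assume "\<not> p i ` component j \<subseteq> group_center (L i)"
  then have "p i ` component j = carrier (L i)"
    using quasisimple_normal_subgroup[OF quasisimple[OF i]
        normal.surj_hom_normal_subgroup[OF normal_component hom[OF i] onto[OF i]]] by blast
  then show False using i not_onto unfolding onto_indices_def by auto
qed

lemma onto_indices_disjoint:
  assumes i: "i < n" and j: "j \<in> J" and k: "k \<in> J"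
    and ij: "i \<in> onto_indices j" and ik: "i \<in> onto_indices k"
  shows "j = k"
proof (rule ccontr)
  assume jk: "j \<noteq> k"
  interpret h: group_hom G "L i" "p i" by (rule hom[OF i])
  have "carrier (L i) \<subseteq> group_center (L i)"
  proof
    fix a assume "a \<in> carrier (L i)"
    then obtain x where x: "x \<in> component j" "a = p i x" using ij unfolding onto_indices_def by auto
    have xG: "x \<in> carrier G" using x(1) component_carrier by blast
    show "a \<in> group_center (L i)"
    proof (rule group_centerI)
      show "a \<in> carrier (L i)" using xG x(2) by simp
      fix b assume "b \<in> carrier (L i)"
      then obtain y where y: "y \<in> component k" "b = p i y" using ik unfolding onto_indices_def by auto
      have "y \<in> carrier G" using y(1) component_carrier by blast
      then show "a \<otimes>\<^bsub>L i\<^esub> b = b \<otimes>\<^bsub>L i\<^esub> a"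
        using components_commute[OF j k jk x(1) y(1)] x(2) y(2) xG by (metis h.hom_mult)
    qed
  qed
  then show False using quasisimple_not_central[OF quasisimple[OF i]] by blast
qed

lemma ex_onto_indices: assumes i: "i < n" shows "\<exists>j\<in>J. i \<in> onto_indices j"
proof (rule ccontr)
  assume "\<not> (\<exists>j\<in>J. i \<in> onto_indices j)"
  then have central: "p i ` (\<Union>j\<in>J. component j) \<subseteq> group_center (L i)"
    using image_component_central[OF i] by blast
  interpret h: group_hom G "L i" "p i" by (rule hom[OF i])
  have "carrier (L i) = p i ` generate G (\<Union>j\<in>J. component j)"
    using onto[OF i] generate_components by simp
  also have "\<dots> = generate (L i) (p i ` (\<Union>j\<in>J. component j))"
    by (rule h.generate_img[symmetric]) (use component_carrier in blast)
  also have "\<dots> \<subseteq> group_center (L i)"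
    by (rule h.H.generate_subgroup_incl[OF central h.H.subgroup_group_center])
  finally show False using quasisimple_not_central[OF quasisimple[OF i]] by blast
qed

lemma restrict_notin_onto_indices:
  assumes j: "j \<in> J" and k: "k \<in> J" and kj: "k \<noteq> j"
  shows "restrict (p k) (carrier G) \<notin> (\<lambda>i. restrict (p i) (carrier G)) ` onto_indices j"
proof
  assume "restrict (p k) (carrier G) \<in> (\<lambda>i. restrict (p i) (carrier G)) ` onto_indices j"
  then obtain i where i: "i \<in> onto_indices j"
    and eq: "restrict (p k) (carrier G) = restrict (p i) (carrier G)" by auto
  have same: "p k x = p i x" if "x \<in> carrier G" for x
    using fun_cong[OF eq, of x] that by simp
  have kn: "k < n" and iL: "i < n" "p i ` component j = carrier (L i)"
    using k basis_subset i unfolding onto_indices_def by auto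
  have "p k ` component j = p i ` component j"
    using same component_carrier by (intro image_cong) auto
  also have "\<dots> = p i ` carrier G" using iL onto by simp
  also have "\<dots> = p k ` carrier G" using same by (intro image_cong) auto
  finally have "k \<in> onto_indices j" using kn onto[OF kn] unfolding onto_indices_def by simp
  then show False using onto_indices_disjoint[OF kn j k _ mem_onto_indices_self[OF k]] kj by blast
qed

lemma ex_mult_components_mod_center:
  assumes x: "\<And>j. j \<in> J \<Longrightarrow> x j \<in> component j"
  shows "\<exists>g\<in>carrier G. \<forall>i<n. \<forall>j\<in>J. i \<in> onto_indices j \<longrightarrow>
    (\<exists>c\<in>group_center (L i). p i g = p i (x j) \<otimes>\<^bsub>L i\<^esub> c)"
proof -
  let ?ks = "sorted_list_of_set J"
  have ks: "distinct ?ks" "set ?ks = J" using finite_subset[OF basis_subset] by auto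
  have xG: "x k \<in> carrier G" if "k \<in> set ?ks" for k using x that ks(2) component_carrier by blast
  show ?thesis
  proof (intro bexI[of _ "foldr (\<lambda>k y. x k \<otimes> y) ?ks \<one>"] allI impI ballI)
    show "foldr (\<lambda>k y. x k \<otimes> y) ?ks \<one> \<in> carrier G" by (rule foldr_mult_closed[OF xG])
    fix i j assume i: "i < n" and j: "j \<in> J" and ij: "i \<in> onto_indices j"
    have "p i (x k) \<in> group_center (L i)" if "k \<in> set ?ks" "k \<noteq> j" for k
    proof -
      have "i \<notin> onto_indices k" using onto_indices_disjoint[OF i j _ ij] that ks(2) by auto
      then show ?thesis using image_component_central[OF i] x that ks(2) by blast
    qed
    then show "\<exists>c\<in>group_center (L i). p i (foldr (\<lambda>k y. x k \<otimes> y) ?ks \<one>) = p i (x j) \<otimes>\<^bsub>L i\<^esub> c"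
      using group_hom.hom_foldr_mult_mod_center[OF hom[OF i] ks(1), where x = x and j = j] xG j ks(2)
      by auto
  qed
qed

end

section \<open>Representations with quasisimple images\<close>

lemma quasisimple_quotients_of_representations:
  assumes G: "perfect_group G"
    and rep: "\<And>i. i < n \<Longrightarrow> representation G (d i) (\<Phi> i)"
    and faithful: "\<And>g. g \<in> carrier G \<Longrightarrow> (\<forall>i < n. \<Phi> i g = 1\<^sub>m (d i)) \<Longrightarrow> g = \<one>\<^bsub>G\<^esub>"
    and qs: "\<And>i. i < n \<Longrightarrow> quasisimple (rep_image G (d i) (\<Phi> i))"
  shows "quasisimple_quotients G n (\<lambda>i. rep_image G (d i) (\<Phi> i)) \<Phi>"
proof (intro quasisimple_quotients.intro quasisimple_quotients_axioms.intro)
  show "group G" "derived G (carrier G) = carrier G" using G unfolding perfect_group_def by auto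
  fix i assume i: "i < n"
  show "group_hom G (rep_image G (d i) (\<Phi> i)) (\<Phi> i)"
    using \<open>group G\<close> quasisimple_imp_group[OF qs[OF i]] rep[OF i]
    unfolding group_hom_def group_hom_axioms_def hom_def representation_def rep_image_def mat_group_def
    by auto
qed (use faithful qs in \<open>auto simp: rep_image_def mat_group_def\<close>)

locale minimal_rep_basis =
  minimal_central_basis G n "\<lambda>i. rep_image G (d i) (\<Phi> i)" \<Phi> J
  for G :: "('a, 'b) monoid_scheme" (structure) and n d \<Phi> J +
  assumes irreducible: "i < n \<Longrightarrow> irreducible_rep G (d i) (\<Phi> i)"
begin

lemma mat_trace_mult_central:
  assumes i: "i < n" and x: "x \<in> carrier G"
    and c: "c \<in> group_center (rep_image G (d i) (\<Phi> i))" and trace: "mat_trace (\<Phi> i x) = 0"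
  shows "mat_trace (\<Phi> i x * c) = 0"
proof -
  have rep: "representation G (d i) (\<Phi> i)" using irreducible[OF i] unfolding irreducible_rep_def by simp
  then have dim: "\<Phi> i g \<in> carrier_mat (d i) (d i)" if "g \<in> carrier G" for g
    using that unfolding representation_def by auto
  have "c \<in> \<Phi> i ` carrier G" using group_center_closed[OF c] by (simp add: rep_image_def mat_group_def)
  then have cd: "c \<in> carrier_mat (d i) (d i)" using dim by auto
  have "c * \<Phi> i g = \<Phi> i g * c" if "g \<in> carrier G" for g
    using group_center_commute[OF c] that by (simp add: rep_image_def mat_group_def)
  then obtain \<mu> where "c = \<mu> \<cdot>\<^sub>m 1\<^sub>m (d i)"
    using irreducible_rep_commuting_scalar[OF irreducible[OF i] cd] by blast
  then show ?thesis using mat_trace_mult_scalar[OF dim[OF x]] trace by simp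
qed

definition common_trace_zeros :: bool where
  "common_trace_zeros \<longleftrightarrow>
     (\<forall>K X. subgroup K G \<longrightarrow> quasisimple (G\<lparr>carrier := K\<rparr>) \<longrightarrow> X \<subseteq> {..<n} \<longrightarrow>
        (\<lambda>i. restrict (\<Phi> i) (carrier G)) ` X \<subset> (\<lambda>i. restrict (\<Phi> i) (carrier G)) ` {..<n} \<longrightarrow>
        (\<forall>i \<in> X. \<Phi> i ` K = \<Phi> i ` carrier G) \<longrightarrow>
        (\<exists>h \<in> K. \<forall>i \<in> X. mat_trace (\<Phi> i h) = 0))"

lemma component_element_with_zero_traces:
  assumes zeros: "common_trace_zeros" and j: "j \<in> J" and k: "k \<in> J" and kj: "k \<noteq> j"
  shows "\<exists>x\<in>component j. \<forall>i\<in>onto_indices j. mat_trace (\<Phi> i x) = 0"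
proof -
  have X: "onto_indices j \<subseteq> {..<n}" unfolding onto_indices_def by auto
  have "(\<lambda>i. restrict (\<Phi> i) (carrier G)) ` onto_indices j \<subseteq> (\<lambda>i. restrict (\<Phi> i) (carrier G)) ` {..<n}"
    using X by (rule image_mono)
  moreover have "restrict (\<Phi> k) (carrier G) \<in> (\<lambda>i. restrict (\<Phi> i) (carrier G)) ` {..<n}"
    using k basis_subset by blast
  ultimately have proper: "(\<lambda>i. restrict (\<Phi> i) (carrier G)) ` onto_indices j
      \<subset> (\<lambda>i. restrict (\<Phi> i) (carrier G)) ` {..<n}"
    using restrict_notin_onto_indices[OF j k kj] by blast
  have qs: "quasisimple (G\<lparr>carrier := component j\<rparr>)"
    using quasisimple_cover_component[OF j] unfolding quasisimple_cover_of_def by blast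
  have "\<forall>i\<in>onto_indices j. \<Phi> i ` component j = \<Phi> i ` carrier G"
    unfolding onto_indices_def by (simp add: rep_image_def mat_group_def)
  then show ?thesis
    using zeros[unfolded common_trace_zeros_def, rule_format, OF subgroup_component qs X proper] by blast
qed

lemma ex_element_with_zero_traces:
  assumes zeros: "common_trace_zeros" and j: "j \<in> J" and k: "k \<in> J" and kj: "k \<noteq> j"
  shows "\<exists>g\<in>carrier G. \<forall>i<n. mat_trace (\<Phi> i g) = 0"
proof -
  have "\<forall>l\<in>J. \<exists>x\<in>component l. \<forall>i\<in>onto_indices l. mat_trace (\<Phi> i x) = 0"
  proof
    fix l assume l: "l \<in> J"
    obtain m where "m \<in> J" "m \<noteq> l" using j k kj l by metis
    then show "\<exists>x\<in>component l. \<forall>i\<in>onto_indices l. mat_trace (\<Phi> i x) = 0"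
      using component_element_with_zero_traces[OF zeros l] by blast
  qed
  then obtain x where
    "\<forall>l\<in>J. x l \<in> component l \<and> (\<forall>i\<in>onto_indices l. mat_trace (\<Phi> i (x l)) = 0)"
    using bchoice[of J] by (metis (no_types, lifting))
  then have x: "\<And>l. l \<in> J \<Longrightarrow> x l \<in> component l"
    and trace_x: "\<And>l i. l \<in> J \<Longrightarrow> i \<in> onto_indices l \<Longrightarrow> mat_trace (\<Phi> i (x l)) = 0"
    by blast+
  obtain g where g: "g \<in> carrier G" and gx: "\<forall>i<n. \<forall>l\<in>J. i \<in> onto_indices l \<longrightarrow>
      (\<exists>c\<in>group_center (rep_image G (d i) (\<Phi> i)). \<Phi> i g = \<Phi> i (x l) * c)"
    using ex_mult_components_mod_center[OF x] by (auto simp: rep_image_def mat_group_def)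
  have "mat_trace (\<Phi> i g) = 0" if i: "i < n" for i
  proof -
    obtain l where l: "l \<in> J" "i \<in> onto_indices l" using ex_onto_indices[OF i] by blast
    then obtain c where "c \<in> group_center (rep_image G (d i) (\<Phi> i))" "\<Phi> i g = \<Phi> i (x l) * c"
      using gx i by blast
    then show ?thesis
      using mat_trace_mult_central[OF i _ _ trace_x[OF l]] x[OF l(1)] component_carrier by auto
  qed
  then show ?thesis using g by blast
qed

lemma quasisimple_if_traces_nonzero:
  assumes traces: "\<forall>g \<in> carrier G. (\<Sum>i<n. mat_trace (\<Phi> i g)) \<noteq> 0"
    and zeros: "common_trace_zeros"
  shows "quasisimple G"
proof -
  have "n \<noteq> 0" using bspec[OF traces one_closed] by (cases n) auto
  then obtain j where j: "j \<in> J" using ex_onto_indices by blast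
  have "J = {j}"
  proof (rule ccontr)
    assume "J \<noteq> {j}"
    then obtain k where "k \<in> J" "k \<noteq> j" using j by blast
    then obtain g where "g \<in> carrier G" "\<forall>i<n. mat_trace (\<Phi> i g) = 0"
      using ex_element_with_zero_traces[OF zeros j] by blast
    then have "(\<Sum>i<n. mat_trace (\<Phi> i g)) = 0" by (intro sum.neutral) simp
    then show False using traces \<open>g \<in> carrier G\<close> by blast
  qed
  then have "generate G (component j) = carrier G" using generate_components by simp
  then have "component j = carrier G"
    using generate_subgroup_incl[OF subset_refl subgroup_component] component_carrier by blast
  then show ?thesis using quasisimple_cover_component[OF j] unfolding quasisimple_cover_of_def by simp
qed

end

theorem mainTheorem6:
  fixes G :: "('a, 'b) monoid_scheme"
    and n :: nat
    and d :: "nat \<Rightarrow> nat"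
    and \<Phi> :: "nat \<Rightarrow> 'a \<Rightarrow> complex mat"
  assumes perfect: "perfect_group G"
    and fin: "finite (carrier G)"
    and irred: "\<And>i. i < n \<Longrightarrow> irreducible_rep G (d i) (\<Phi> i)"
    and faithful: "\<And>g. g \<in> carrier G \<Longrightarrow> (\<forall>i < n. \<Phi> i g = 1\<^sub>m (d i)) \<Longrightarrow> g = \<one>\<^bsub>G\<^esub>"
    and qs: "\<And>i. i < n \<Longrightarrow> quasisimple (rep_image G (d i) (\<Phi> i))"
  shows "(\<exists>J H. J \<subseteq> {..<n} \<and> internal_central_product G J H \<and>
            (\<forall>j \<in> J. quasisimple_cover_of (G\<lparr>carrier := H j\<rparr>)
                 (rep_image G (d j) (\<Phi> j) Mod group_center (rep_image G (d j) (\<Phi> j)))))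
     \<and> ((\<forall>g \<in> carrier G. (\<Sum>i<n. mat_trace (\<Phi> i g)) \<noteq> 0) \<longrightarrow>
         (\<forall>K X. subgroup K G \<longrightarrow> quasisimple (G\<lparr>carrier := K\<rparr>) \<longrightarrow> X \<subseteq> {..<n} \<longrightarrow>
              (\<lambda>i. restrict (\<Phi> i) (carrier G)) ` X \<subset> (\<lambda>i. restrict (\<Phi> i) (carrier G)) ` {..<n} \<longrightarrow>
              (\<forall>i \<in> X. \<Phi> i ` K = \<Phi> i ` carrier G) \<longrightarrow>
              (\<exists>h \<in> K. \<forall>i \<in> X. mat_trace (\<Phi> i h) = 0))
         \<longrightarrow> quasisimple G)"
proof -
  have rep: "\<And>i. i < n \<Longrightarrow> representation G (d i) (\<Phi> i)"
    using irred unfolding irreducible_rep_def by simp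
  have "quasisimple_quotients G n (\<lambda>i. rep_image G (d i) (\<Phi> i)) \<Phi>"
    by (rule quasisimple_quotients_of_representations[OF perfect rep faithful qs])
  then obtain J where "minimal_central_basis G n (\<lambda>i. rep_image G (d i) (\<Phi> i)) \<Phi> J"
    using quasisimple_quotients.ex_minimal_central_basis by blast
  then interpret minimal_rep_basis G n d \<Phi> J
    using irred by (intro minimal_rep_basis.intro minimal_rep_basis_axioms.intro)
  show ?thesis
    using basis_subset central_product_of_components
      quasisimple_if_traces_nonzero[unfolded common_trace_zeros_def]
    by (intro conjI impI exI[of _ J] exI[of _ component]) auto
qed

end
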